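(* Let $\Psi$ be a root subsystem of $\Phi$. (i) If $\Psi$ is saturated in $\Phi$, then for every $D\in\mathrm{Ch}_\Psi$ there exists at least one $C\in\mathrm{Ch}_\Phi$ lifting $D$. (ii) If some chamber $C\in\mathrm{Ch}_\Phi$ lifts some chamber $D\in\mathrm{Ch}_\Psi$, then $\Psi$ is saturated in $\Phi$.
   Context: $E$ is a finite-dimensional real Euclidean space with inner product $(\cdot,\cdot)$; $\Phi\subset E$ is a finite (reduced) root system (not necessarily spanning $E$, not necessarily crystallographic), with reflections $\omega_\alpha$ through $L_\alpha=\alpha^\perp$. A root subsystem is a nonempty $\Psi\subset\Phi$ stable under $\omega_\alpha$, $\alpha\in\Psi$. $\Psi$ is saturated in $\Phi$ if $\Psi=\mathbb R\Psi\cap\Phi$, where $\mathbb R\Psi$ is the real linear span. For $X\subset\Phi$, $\mathrm{Ch}_X$ is the set of connected components of $E\setminus\bigcup_{\alpha\in X}L_\alpha$. For $C\in\mathrm{Ch}_\Phi$, $\Phi^+(C)=\{\alpha\in\Phi:(e,\alpha)>0\ \forall e\in C\}$ and $\Phi^s(C)$ is the unique simple system of $\Phi$ contained in $\Phi^+(C)$ (a simple system is a linearly independent subset $S$ such that each root is a linear combination of elements of $S$ with all coefficients $\ge0$ or all $\le0$). Similarly $\Psi^+(D)$, $\Psi^s(D)$ for $D\in\mathrm{Ch}_\Psi$. A chamber $C\in\mathrm{Ch}_\Phi$ lifts $D\in\mathrm{Ch}_\Psi$ if $\Psi^s(D)\subset\Phi^s(C)$. *)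

theory Defs
  imports "HOL-Analysis.Analysis"
begin

definition refl :: "'a::euclidean_space \<Rightarrow> 'a \<Rightarrow> 'a" where
  "refl \<alpha> x = x - (2 * (x \<bullet> \<alpha>) / (\<alpha> \<bullet> \<alpha>)) *\<^sub>R \<alpha>"

text \<open>Finite reduced root system (not necessarily spanning, not necessarily crystallographic).\<close>
definition root_system :: "'a::euclidean_space set \<Rightarrow> bool" where
  "root_system \<Phi> \<longleftrightarrow> finite \<Phi> \<and> 0 \<notin> \<Phi>
     \<and> (\<forall>\<alpha>\<in>\<Phi>. \<forall>\<beta>\<in>\<Phi>. refl \<alpha> \<beta> \<in> \<Phi>)
     \<and> (\<forall>\<alpha>\<in>\<Phi>. \<forall>c::real. c *\<^sub>R \<alpha> \<in> \<Phi> \<longrightarrow> c = 1 \<or> c = -1)"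

definition root_subsystem :: "'a::euclidean_space set \<Rightarrow> 'a set \<Rightarrow> bool" where
  "root_subsystem \<Phi> \<Psi> \<longleftrightarrow> \<Psi> \<noteq> {} \<and> \<Psi> \<subseteq> \<Phi> \<and> (\<forall>\<alpha>\<in>\<Psi>. \<forall>\<beta>\<in>\<Psi>. refl \<alpha> \<beta> \<in> \<Psi>)"

definition saturated :: "'a::euclidean_space set \<Rightarrow> 'a set \<Rightarrow> bool" where
  "saturated \<Phi> \<Psi> \<longleftrightarrow> \<Psi> = span \<Psi> \<inter> \<Phi>"

definition Ch :: "'a::euclidean_space set \<Rightarrow> 'a set set" where
  "Ch X = components (UNIV - (\<Union>\<alpha>\<in>X. {x. x \<bullet> \<alpha> = 0}))"

definition pos_roots :: "'a::euclidean_space set \<Rightarrow> 'a set \<Rightarrow> 'a set" where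
  "pos_roots \<Phi> C = {\<alpha>\<in>\<Phi>. \<forall>e\<in>C. e \<bullet> \<alpha> > 0}"

definition simple_system :: "'a::euclidean_space set \<Rightarrow> 'a set \<Rightarrow> bool" where
  "simple_system \<Phi> S \<longleftrightarrow> S \<subseteq> \<Phi> \<and> independent S \<and>
     (\<forall>\<beta>\<in>\<Phi>. \<exists>c::'a \<Rightarrow> real. \<beta> = (\<Sum>\<alpha>\<in>S. c \<alpha> *\<^sub>R \<alpha>) \<and>
        ((\<forall>\<alpha>\<in>S. c \<alpha> \<ge> 0) \<or> (\<forall>\<alpha>\<in>S. c \<alpha> \<le> 0)))"

text \<open>The unique simple system contained in the positive roots of a chamber.\<close>
definition simple_roots :: "'a::euclidean_space set \<Rightarrow> 'a set \<Rightarrow> 'a set" where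
  "simple_roots \<Phi> C = (THE S. simple_system \<Phi> S \<and> S \<subseteq> pos_roots \<Phi> C)"

definition lifts :: "'a::euclidean_space set \<Rightarrow> 'a set \<Rightarrow> 'a set \<Rightarrow> 'a set \<Rightarrow> bool" where
  "lifts \<Phi> \<Psi> C D \<longleftrightarrow> simple_roots \<Psi> D \<subseteq> simple_roots \<Phi> C"

end

theory Submission
  imports Defs
begin

text \<open>
  (ii) Let \<open>J \<subseteq> S\<close> be the simple roots of \<open>D\<close> and \<open>C\<close>. A root of \<open>\<Phi>\<close> in \<open>span J\<close> has its
  \<open>S\<close>-coordinates supported on \<open>J\<close>, hence it is \<open>\<plusminus>\<close> a nonnegative combination of \<open>J\<close>.
  Such a root lies in \<open>\<Psi>\<close>: reflecting it in a suitable \<open>\<alpha> \<in> J\<close> keeps it a nonnegative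
  combination of \<open>J\<close> (sign coherence of \<open>S\<close>-coordinates) and lowers its height, and \<open>\<Psi>\<close> is
  stable under reflections in \<open>J\<close>.

  (i) Take \<open>e \<in> D\<close>, a vector \<open>y\<close> orthogonal to \<open>span \<Psi>\<close> but not to any root outside it, and
  \<open>x = t y + e\<close> for large \<open>t\<close>. Then \<open>x\<close> orders roots in \<open>span \<Psi>\<close> like \<open>e\<close> and all others
  like \<open>y\<close>. Writing \<open>\<alpha> \<in> J\<close> as a nonnegative combination of the simple roots of the chamber of
  \<open>x\<close>, applying \<open>y\<close> shows only simple roots in \<open>span \<Psi>\<close> occur; by saturation they are
  \<open>e\<close>-positive roots of \<open>\<Psi>\<close>, hence nonnegative combinations of \<open>J\<close>, and by linear independence
  of \<open>J\<close> one of them is \<open>\<alpha>\<close> itself.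
\<close>

lemma refl_self: "\<alpha> \<noteq> 0 \<Longrightarrow> refl \<alpha> \<alpha> = - \<alpha>"
  by (simp add: refl_def algebra_simps scaleR_2)

lemma refl_refl: "\<alpha> \<noteq> 0 \<Longrightarrow> refl \<alpha> (refl \<alpha> x) = x"
proof -
  assume "\<alpha> \<noteq> 0"
  then have "refl \<alpha> x \<bullet> \<alpha> = - (x \<bullet> \<alpha>)"
    by (simp add: refl_def inner_diff_left algebra_simps)
  then have "refl \<alpha> (refl \<alpha> x) = refl \<alpha> x + (2 * (x \<bullet> \<alpha>) / (\<alpha> \<bullet> \<alpha>)) *\<^sub>R \<alpha>"
    by (simp add: refl_def[of \<alpha> "refl \<alpha> x"])
  then show ?thesis by (simp add: refl_def)
qed

lemma root_system_finite: "root_system \<Phi> \<Longrightarrow> finite \<Phi>"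
  by (simp add: root_system_def)

lemma root_system_uminus: "root_system \<Phi> \<Longrightarrow> \<alpha> \<in> \<Phi> \<Longrightarrow> - \<alpha> \<in> \<Phi>"
  unfolding root_system_def by (metis refl_self)

lemma root_system_pos_multiple:
  "root_system \<Phi> \<Longrightarrow> \<alpha> \<in> \<Phi> \<Longrightarrow> r *\<^sub>R \<alpha> \<in> \<Phi> \<Longrightarrow> r > 0 \<Longrightarrow> r = 1"
  unfolding root_system_def by force

lemma root_subsystem_imp_root_system: "root_system \<Phi> \<Longrightarrow> root_subsystem \<Phi> \<Psi> \<Longrightarrow> root_system \<Psi>"
  unfolding root_system_def root_subsystem_def by (meson finite_subset subsetD)

lemma simple_system_finite: "root_system \<Phi> \<Longrightarrow> simple_system \<Phi> S \<Longrightarrow> finite S"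
  unfolding simple_system_def using finite_subset root_system_finite by auto

subsection \<open>Chambers\<close>

lemma Ch_inner_nonzero: "C \<in> Ch X \<Longrightarrow> x \<in> C \<Longrightarrow> \<alpha> \<in> X \<Longrightarrow> x \<bullet> \<alpha> \<noteq> 0"
  unfolding Ch_def using in_components_subset by blast

lemma Ch_nonempty: "C \<in> Ch X \<Longrightarrow> C \<noteq> {}"
  unfolding Ch_def using in_components_nonempty by blast

lemma Ch_exists: "\<forall>\<alpha>\<in>X. x \<bullet> \<alpha> \<noteq> 0 \<Longrightarrow> \<exists>C\<in>Ch X. x \<in> C"
  unfolding Ch_def components_def by (auto intro: connected_component_refl)

lemma Ch_same_sign:
  assumes C: "C \<in> Ch X" and "x \<in> C" "y \<in> C" "\<alpha> \<in> X" "x \<bullet> \<alpha> > 0"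
  shows "y \<bullet> \<alpha> > 0"
proof (rule ccontr)
  assume "\<not> y \<bullet> \<alpha> > 0"
  then have "inner \<alpha> y \<le> 0" "0 \<le> inner \<alpha> x"
    using \<open>x \<bullet> \<alpha> > 0\<close> by (auto simp: inner_commute)
  moreover have "connected C"
    using C in_components_connected by (auto simp: Ch_def)
  ultimately obtain z where "z \<in> C" "z \<bullet> \<alpha> = 0"
    using connected_ivt_hyperplane[of C y x \<alpha> 0] \<open>x \<in> C\<close> \<open>y \<in> C\<close> by (auto simp: inner_commute)
  then show False
    using Ch_inner_nonzero[OF C] \<open>\<alpha> \<in> X\<close> by blast
qed

lemma pos_roots_Ch: "C \<in> Ch X \<Longrightarrow> e \<in> C \<Longrightarrow> pos_roots X C = {\<beta>\<in>X. e \<bullet> \<beta> > 0}"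
  unfolding pos_roots_def using Ch_same_sign by blast

subsection \<open>Nonnegative combinations\<close>

definition nonneg_comb :: "'a::real_vector set \<Rightarrow> 'a \<Rightarrow> bool" where
  "nonneg_comb T v \<longleftrightarrow> (\<exists>c. (\<forall>\<gamma>\<in>T. c \<gamma> \<ge> 0) \<and> v = (\<Sum>\<gamma>\<in>T. c \<gamma> *\<^sub>R \<gamma>))"

lemma nonneg_comb_scaleR_mem: "finite T \<Longrightarrow> \<gamma> \<in> T \<Longrightarrow> k \<ge> 0 \<Longrightarrow> nonneg_comb T (k *\<^sub>R \<gamma>)"
  unfolding nonneg_comb_def
  by (rule exI[of _ "\<lambda>\<delta>. if \<delta> = \<gamma> then k else 0"])
    (simp add: if_distrib[of "\<lambda>c. c *\<^sub>R _"] sum.delta cong: if_cong)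

lemma nonneg_comb_mem: "finite T \<Longrightarrow> \<gamma> \<in> T \<Longrightarrow> nonneg_comb T \<gamma>"
  using nonneg_comb_scaleR_mem[of T \<gamma> 1] by simp

lemma sum_comb_compose:
  fixes d :: "'a::real_vector \<Rightarrow> 'a \<Rightarrow> real"
  assumes "\<forall>\<gamma>\<in>T. \<gamma> = (\<Sum>\<delta>\<in>T'. d \<gamma> \<delta> *\<^sub>R \<delta>)"
  shows "(\<Sum>\<gamma>\<in>T. c \<gamma> *\<^sub>R \<gamma>) = (\<Sum>\<delta>\<in>T'. (\<Sum>\<gamma>\<in>T. c \<gamma> * d \<gamma> \<delta>) *\<^sub>R \<delta>)"
proof -
  have "(\<Sum>\<gamma>\<in>T. c \<gamma> *\<^sub>R \<gamma>) = (\<Sum>\<gamma>\<in>T. c \<gamma> *\<^sub>R (\<Sum>\<delta>\<in>T'. d \<gamma> \<delta> *\<^sub>R \<delta>))"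
    using assms by (intro sum.cong) auto
  also have "\<dots> = (\<Sum>\<delta>\<in>T'. (\<Sum>\<gamma>\<in>T. c \<gamma> * d \<gamma> \<delta>) *\<^sub>R \<delta>)"
    by (simp add: scaleR_sum_right scaleR_sum_left sum.swap[of _ T T'])
  finally show ?thesis .
qed

lemma nonneg_comb_trans:
  assumes "nonneg_comb T v" "\<forall>\<gamma>\<in>T. nonneg_comb T' \<gamma>"
  shows "nonneg_comb T' v"
proof -
  obtain c where c: "\<forall>\<gamma>\<in>T. c \<gamma> \<ge> 0" "v = (\<Sum>\<gamma>\<in>T. c \<gamma> *\<^sub>R \<gamma>)"
    using assms(1) by (auto simp: nonneg_comb_def)
  obtain d where d: "\<forall>\<gamma>\<in>T. (\<forall>\<delta>\<in>T'. d \<gamma> \<delta> \<ge> 0) \<and> \<gamma> = (\<Sum>\<delta>\<in>T'. d \<gamma> \<delta> *\<^sub>R \<delta>)"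
    using assms(2) unfolding nonneg_comb_def by metis
  then have "v = (\<Sum>\<delta>\<in>T'. (\<Sum>\<gamma>\<in>T. c \<gamma> * d \<gamma> \<delta>) *\<^sub>R \<delta>)"
    using c(2) sum_comb_compose[where T=T and T'=T' and d=d and c=c] by blast
  then show ?thesis unfolding nonneg_comb_def
    using c(1) d by (intro exI[of _ "\<lambda>\<delta>. \<Sum>\<gamma>\<in>T. c \<gamma> * d \<gamma> \<delta>"]) (auto intro!: sum_nonneg)
qed

lemma independent_coeffs_eq:
  fixes S :: "'a::euclidean_space set"
  assumes "independent S" "(\<Sum>\<gamma>\<in>S. a \<gamma> *\<^sub>R \<gamma>) = (\<Sum>\<gamma>\<in>S. b \<gamma> *\<^sub>R \<gamma>)" "\<gamma> \<in> S"
  shows "a \<gamma> = b \<gamma>"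
proof -
  have "(\<Sum>\<gamma>\<in>S. (a \<gamma> - b \<gamma>) *\<^sub>R \<gamma>) = 0"
    using assms(2) by (simp add: scaleR_diff_left sum_subtractf)
  then show ?thesis
    using assms(1,3) dependent_finite[OF independent_imp_finite[OF assms(1)]]
      exI[of "\<lambda>u. (\<exists>v\<in>S. u v \<noteq> 0) \<and> (\<Sum>v\<in>S. u v *\<^sub>R v) = 0" "\<lambda>v. a v - b v"]
    by auto
qed

lemma independent_subset_coeffs_eq:
  fixes S :: "'a::euclidean_space set"
  assumes "independent S" "J \<subseteq> S" "(\<Sum>\<gamma>\<in>J. a \<gamma> *\<^sub>R \<gamma>) = (\<Sum>\<gamma>\<in>S. b \<gamma> *\<^sub>R \<gamma>)" "\<gamma> \<in> J"
  shows "a \<gamma> = b \<gamma>"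
proof -
  have "(\<Sum>\<gamma>\<in>S. (if \<gamma> \<in> J then a \<gamma> else 0) *\<^sub>R \<gamma>) = (\<Sum>\<gamma>\<in>J. a \<gamma> *\<^sub>R \<gamma>)"
    using assms(1,2) independent_imp_finite by (intro sum.mono_neutral_cong_right) auto
  then show ?thesis
    using independent_coeffs_eq[OF assms(1), of "\<lambda>\<gamma>. if \<gamma> \<in> J then a \<gamma> else 0" b \<gamma>] assms
    by auto
qed

lemma independent_nonneg_comb_extreme:
  fixes x :: "'a::euclidean_space"
  assumes S: "independent S" "x \<in> S" and "finite T"
    and c: "x = (\<Sum>\<gamma>\<in>T. c \<gamma> *\<^sub>R \<gamma>)" "\<forall>\<gamma>\<in>T. c \<gamma> \<ge> 0"
    and T: "\<forall>\<gamma>\<in>T. nonneg_comb S \<gamma>"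
  shows "\<exists>\<gamma>\<in>T. \<exists>r>0. \<gamma> = r *\<^sub>R x"
proof -
  have fS: "finite S" using S(1) independent_imp_finite by blast
  obtain d where d: "\<forall>\<gamma>\<in>T. (\<forall>\<delta>\<in>S. d \<gamma> \<delta> \<ge> 0) \<and> \<gamma> = (\<Sum>\<delta>\<in>S. d \<gamma> \<delta> *\<^sub>R \<delta>)"
    using T unfolding nonneg_comb_def by metis
  have "(\<Sum>\<delta>\<in>S. (\<Sum>\<gamma>\<in>T. c \<gamma> * d \<gamma> \<delta>) *\<^sub>R \<delta>) = (\<Sum>\<delta>\<in>S. (if \<delta> = x then 1 else 0) *\<^sub>R \<delta>)"
    using c(1) sum_comb_compose[where T=T and T'=S and d=d and c=c] d S(2) fS
    by (simp add: if_distrib[of "\<lambda>c. c *\<^sub>R _"] sum.delta cong: if_cong)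
  then have coeff: "(\<Sum>\<gamma>\<in>T. c \<gamma> * d \<gamma> \<delta>) = (if \<delta> = x then 1 else 0)" if "\<delta> \<in> S" for \<delta>
    by (rule independent_coeffs_eq[OF S(1) _ that])
  then have "(\<Sum>\<gamma>\<in>T. c \<gamma> * d \<gamma> x) \<noteq> 0"
    using S(2) by simp
  then obtain \<gamma> where \<gamma>: "\<gamma> \<in> T" "c \<gamma> * d \<gamma> x \<noteq> 0"
    by (meson sum.neutral)
  have cpos: "c \<gamma> > 0" and dpos: "d \<gamma> x > 0"
    using \<gamma> S(2) c(2) d by (auto simp: order_le_less)
  have off_x: "d \<gamma> \<delta> = 0" if "\<delta> \<in> S" "\<delta> \<noteq> x" for \<delta>
  proof -
    have "c \<gamma> * d \<gamma> \<delta> = 0"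
      using coeff[OF that(1)] that sum_nonneg_eq_0_iff[OF \<open>finite T\<close>, of "\<lambda>\<gamma>. c \<gamma> * d \<gamma> \<delta>"]
        c(2) d \<gamma>(1) by auto
    then show ?thesis using cpos by simp
  qed
  have "\<gamma> = (\<Sum>\<delta>\<in>S. d \<gamma> \<delta> *\<^sub>R \<delta>)"
    using d \<gamma>(1) by blast
  also have "\<dots> = (\<Sum>\<delta>\<in>S. (if \<delta> = x then d \<gamma> x else 0) *\<^sub>R \<delta>)"
    by (rule sum.cong) (auto simp: off_x)
  also have "\<dots> = d \<gamma> x *\<^sub>R x"
    using S(2) fS by (simp add: if_distrib[of "\<lambda>c. c *\<^sub>R _"] sum.delta cong: if_cong)
  finally show ?thesis using \<gamma>(1) dpos by blast
qed

lemma nonneg_comb_inner_zero_support: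
  fixes y :: "'a::real_inner"
  assumes "finite S" "\<forall>\<gamma>\<in>S. c \<gamma> \<ge> 0" "\<forall>\<gamma>\<in>S. y \<bullet> \<gamma> \<ge> 0" "y \<bullet> (\<Sum>\<gamma>\<in>S. c \<gamma> *\<^sub>R \<gamma>) = 0"
    and "\<gamma> \<in> S" "y \<bullet> \<gamma> > 0"
  shows "c \<gamma> = 0"
proof -
  have "(\<Sum>\<gamma>\<in>S. c \<gamma> * (y \<bullet> \<gamma>)) = 0" using assms(4) by (simp add: inner_sum_right)
  moreover have "\<forall>\<gamma>\<in>S. c \<gamma> * (y \<bullet> \<gamma>) \<ge> 0" using assms(2,3) by simp
  ultimately have "c \<gamma> * (y \<bullet> \<gamma>) = 0" using assms(5) by (simp add: sum_nonneg_eq_0_iff[OF assms(1)])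
  then show ?thesis using assms(6) by simp
qed

lemma obtuse_disjoint_supports_inner_nonpos:
  assumes obtuse: "\<forall>\<alpha>\<in>S. \<forall>\<beta>\<in>S. \<alpha> \<noteq> \<beta> \<longrightarrow> \<alpha> \<bullet> \<beta> \<le> 0"
    and "\<forall>v\<in>S. p v \<ge> 0" "\<forall>v\<in>S. q v \<ge> 0" "\<forall>v\<in>S. p v * q v = 0"
  shows "(\<Sum>v\<in>S. p v *\<^sub>R v) \<bullet> (\<Sum>v\<in>S. q v *\<^sub>R v) \<le> 0"
proof -
  have "(\<Sum>v\<in>S. p v *\<^sub>R v) \<bullet> (\<Sum>v\<in>S. q v *\<^sub>R v) = (\<Sum>a\<in>S. p a * (a \<bullet> (\<Sum>v\<in>S. q v *\<^sub>R v)))"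
    by (simp add: inner_sum_left)
  also have "\<dots> = (\<Sum>a\<in>S. \<Sum>b\<in>S. p a * q b * (a \<bullet> b))"
    by (simp add: inner_sum_right sum_distrib_left mult.assoc)
  also have "\<dots> \<le> 0"
  proof (intro sum_nonpos)
    fix a b assume "a \<in> S" "b \<in> S"
    show "p a * q b * (a \<bullet> b) \<le> 0"
    proof (cases "a = b")
      case True
      then have "p a * q b = 0" using assms(4) \<open>b \<in> S\<close> by blast
      then show ?thesis by (simp only: mult_zero_left order_refl)
    next
      case False
      then show ?thesis
        using assms \<open>a \<in> S\<close> \<open>b \<in> S\<close> by (simp add: mult_nonneg_nonpos)
    qed
  qed
  finally show ?thesis .
qed

text \<open>Splitting a vanishing combination into positive and negative parts gives
  \<open>\<sigma> = \<Sum> p\<^sub>v v = \<Sum> q\<^sub>v v\<close> with \<open>\<sigma> \<bullet> \<sigma> \<le> 0\<close>; then \<open>e\<close> forces \<open>p = q = 0\<close>.\<close>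
lemma pairwise_obtuse_independent:
  assumes fin: "finite S" and pos: "\<forall>\<gamma>\<in>S. e \<bullet> \<gamma> > 0"
    and obtuse: "\<forall>\<alpha>\<in>S. \<forall>\<beta>\<in>S. \<alpha> \<noteq> \<beta> \<longrightarrow> \<alpha> \<bullet> \<beta> \<le> 0"
  shows "independent S"
proof -
  have "u v = 0" if u: "(\<Sum>v\<in>S. u v *\<^sub>R v) = 0" and "v \<in> S" for u v
  proof -
    define p where "p v = max (u v) 0" for v
    define q where "q v = max (- u v) 0" for v
    have pq: "u v = p v - q v" "p v \<ge> 0" "q v \<ge> 0" "p v * q v = 0" for v
      by (auto simp: p_def q_def max_def)
    define \<sigma> where "\<sigma> = (\<Sum>v\<in>S. p v *\<^sub>R v)"
    have \<sigma>: "\<sigma> = (\<Sum>v\<in>S. q v *\<^sub>R v)"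
      using u by (simp add: \<sigma>_def pq(1) scaleR_diff_left sum_subtractf)
    have "\<sigma> \<bullet> \<sigma> \<le> 0"
      using obtuse_disjoint_supports_inner_nonpos[OF obtuse, of p q] pq
      by (subst (2) \<sigma>) (simp add: \<sigma>_def)
    then have "\<sigma> = 0" by (metis inner_eq_zero_iff inner_ge_zero order_antisym)
    then have "e \<bullet> (\<Sum>v\<in>S. p v *\<^sub>R v) = 0" "e \<bullet> (\<Sum>v\<in>S. q v *\<^sub>R v) = 0"
      using \<sigma> by (simp_all add: \<sigma>_def)
    then have "p v = 0" "q v = 0"
      using nonneg_comb_inner_zero_support[OF fin, of _ e v] pq(2,3) pos \<open>v \<in> S\<close>
      by (simp_all add: less_imp_le)
    then show ?thesis using pq(1) by simp
  qed
  then show ?thesis by (auto simp: dependent_finite[OF fin])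
qed

subsection \<open>Simple systems\<close>

lemma exists_irredundant_generators:
  assumes "finite P"
  obtains S where "S \<subseteq> P" "\<forall>\<beta>\<in>P. nonneg_comb S \<beta>" "\<forall>x\<in>S. \<not> nonneg_comb (S - {x}) x"
proof -
  define gen where "gen T \<longleftrightarrow> T \<subseteq> P \<and> (\<forall>\<beta>\<in>P. nonneg_comb T \<beta>)" for T
  have "gen P" using nonneg_comb_mem[OF assms] by (simp add: gen_def)
  then obtain S where S: "gen S" and min: "\<forall>T. gen T \<longrightarrow> card S \<le> card T"
    using ex_has_least_nat[of gen P card] by blast
  have "finite S" using S assms by (meson finite_subset gen_def)
  have "\<not> nonneg_comb (S - {x}) x" if "x \<in> S" for x
  proof
    assume x: "nonneg_comb (S - {x}) x"
    have "nonneg_comb (S - {x}) \<gamma>" if "\<gamma> \<in> S" for \<gamma>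
      using x nonneg_comb_mem[of "S - {x}" \<gamma>] \<open>finite S\<close> that by (cases "\<gamma> = x") auto
    then have "gen (S - {x})"
      using S nonneg_comb_trans[of S _ "S - {x}"] by (auto simp: gen_def)
    then have "card S \<le> card (S - {x})" using min by blast
    then show False using card_Diff1_less[OF \<open>finite S\<close> that] by simp
  qed
  then show ?thesis using S that by (auto simp: gen_def)
qed

text \<open>Either the coefficient of \<open>x\<close> in the sum is at least \<open>t\<close>, and comparing \<open>e\<close>-values
  bounds \<open>e \<bullet> w\<close>, or solving for \<open>x\<close> makes it redundant.\<close>
lemma irredundant_generator_split:
  assumes fin: "finite S" and pos: "\<forall>\<gamma>\<in>S. e \<bullet> \<gamma> > 0"
    and irr: "\<forall>x\<in>S. \<not> nonneg_comb (S - {x}) x"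
    and x: "x \<in> S" and "t > 0" and split: "t *\<^sub>R x = w + (\<Sum>\<gamma>\<in>S. c \<gamma> *\<^sub>R \<gamma>)"
    and c: "\<forall>\<gamma>\<in>S. c \<gamma> \<ge> 0" and w: "nonneg_comb (S - {x}) w"
  shows "e \<bullet> w \<le> 0"
proof (cases "c x < t")
  case True
  obtain d where d: "\<forall>\<gamma>\<in>S - {x}. d \<gamma> \<ge> 0" "w = (\<Sum>\<gamma>\<in>S - {x}. d \<gamma> *\<^sub>R \<gamma>)"
    using w by (auto simp: nonneg_comb_def)
  have "(\<Sum>\<gamma>\<in>S. c \<gamma> *\<^sub>R \<gamma>) = c x *\<^sub>R x + (\<Sum>\<gamma>\<in>S - {x}. c \<gamma> *\<^sub>R \<gamma>)"
    using fin x by (simp add: sum.remove)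
  then have "(t - c x) *\<^sub>R x = w + (\<Sum>\<gamma>\<in>S - {x}. c \<gamma> *\<^sub>R \<gamma>)"
    using split by (simp add: algebra_simps)
  also have "\<dots> = (\<Sum>\<gamma>\<in>S - {x}. (d \<gamma> + c \<gamma>) *\<^sub>R \<gamma>)"
    using d(2) by (simp add: scaleR_add_left sum.distrib)
  finally have sum: "(t - c x) *\<^sub>R x = (\<Sum>\<gamma>\<in>S - {x}. (d \<gamma> + c \<gamma>) *\<^sub>R \<gamma>)" .
  have "x = (1 / (t - c x)) *\<^sub>R ((t - c x) *\<^sub>R x)" using True by simp
  also have "\<dots> = (\<Sum>\<gamma>\<in>S - {x}. ((d \<gamma> + c \<gamma>) / (t - c x)) *\<^sub>R \<gamma>)"
    unfolding sum by (simp add: scaleR_sum_right)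
  finally have "x = (\<Sum>\<gamma>\<in>S - {x}. ((d \<gamma> + c \<gamma>) / (t - c x)) *\<^sub>R \<gamma>)" .
  then have "nonneg_comb (S - {x}) x"
    unfolding nonneg_comb_def using True d(1) c by (intro exI[of _ "\<lambda>\<gamma>. (d \<gamma> + c \<gamma>) / (t - c x)"]) auto
  then show ?thesis using irr x by blast
next
  case False
  have "t * (e \<bullet> x) = e \<bullet> w + (\<Sum>\<gamma>\<in>S. c \<gamma> * (e \<bullet> \<gamma>))"
    using arg_cong[OF split, of "inner e"] by (simp add: inner_add_right inner_sum_right)
  moreover have "c x * (e \<bullet> x) \<le> (\<Sum>\<gamma>\<in>S. c \<gamma> * (e \<bullet> \<gamma>))"
    using member_le_sum[of x S "\<lambda>\<gamma>. c \<gamma> * (e \<bullet> \<gamma>)"] fin x c pos by (simp add: less_imp_le)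
  moreover have "t * (e \<bullet> x) \<le> c x * (e \<bullet> x)"
    using False pos x by (simp add: mult_right_mono)
  ultimately show ?thesis by linarith
qed

lemma irredundant_positive_roots_obtuse:
  assumes rs: "root_system \<Phi>" and reg: "\<forall>\<beta>\<in>\<Phi>. e \<bullet> \<beta> \<noteq> 0"
    and S: "S \<subseteq> {\<beta>\<in>\<Phi>. e \<bullet> \<beta> > 0}" "\<forall>\<beta>\<in>{\<beta>\<in>\<Phi>. e \<bullet> \<beta> > 0}. nonneg_comb S \<beta>"
    and irr: "\<forall>x\<in>S. \<not> nonneg_comb (S - {x}) x"
    and ab: "\<alpha> \<in> S" "\<beta> \<in> S" "\<alpha> \<noteq> \<beta>"
  shows "\<alpha> \<bullet> \<beta> \<le> 0"
proof (rule ccontr)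
  assume "\<not> \<alpha> \<bullet> \<beta> \<le> 0"
  have fin: "finite S" using S(1) by (auto intro: finite_subset[OF _ root_system_finite[OF rs]])
  have pos: "\<forall>\<gamma>\<in>S. e \<bullet> \<gamma> > 0" and SPhi: "S \<subseteq> \<Phi>" using S(1) by auto
  have "\<alpha> \<noteq> 0" using ab SPhi rs by (auto simp: root_system_def)
  define k where "k = 2 * (\<beta> \<bullet> \<alpha>) / (\<alpha> \<bullet> \<alpha>)"
  have k: "k > 0" using \<open>\<not> \<alpha> \<bullet> \<beta> \<le> 0\<close> \<open>\<alpha> \<noteq> 0\<close> by (simp add: k_def inner_commute)
  have refl: "refl \<alpha> \<beta> = \<beta> - k *\<^sub>R \<alpha>" by (simp add: refl_def k_def)
  have "refl \<alpha> \<beta> \<in> \<Phi>" using rs ab SPhi unfolding root_system_def by blast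
  then consider "refl \<alpha> \<beta> \<in> {\<beta>\<in>\<Phi>. e \<bullet> \<beta> > 0}" | "- refl \<alpha> \<beta> \<in> {\<beta>\<in>\<Phi>. e \<bullet> \<beta> > 0}"
    using reg root_system_uminus[OF rs] by (force simp: linorder_neq_iff)
  then show False
  proof cases
    case 1
    then obtain c where c: "\<forall>\<gamma>\<in>S. c \<gamma> \<ge> 0" "refl \<alpha> \<beta> = (\<Sum>\<gamma>\<in>S. c \<gamma> *\<^sub>R \<gamma>)"
      using S(2) by (auto simp: nonneg_comb_def)
    have split: "1 *\<^sub>R \<beta> = k *\<^sub>R \<alpha> + (\<Sum>\<gamma>\<in>S. c \<gamma> *\<^sub>R \<gamma>)" using refl c(2) by simp
    have "nonneg_comb (S - {\<beta>}) (k *\<^sub>R \<alpha>)"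
      using nonneg_comb_scaleR_mem[of "S - {\<beta>}" \<alpha> k] fin ab k by simp
    then have "e \<bullet> (k *\<^sub>R \<alpha>) \<le> 0"
      by (rule irredundant_generator_split[OF fin pos irr ab(2) zero_less_one split c(1)])
    then show False using k pos ab(1) by (force simp: mult_le_0_iff)
  next
    case 2
    then obtain c where c: "\<forall>\<gamma>\<in>S. c \<gamma> \<ge> 0" "- refl \<alpha> \<beta> = (\<Sum>\<gamma>\<in>S. c \<gamma> *\<^sub>R \<gamma>)"
      using S(2) by (auto simp: nonneg_comb_def)
    have split: "k *\<^sub>R \<alpha> = \<beta> + (\<Sum>\<gamma>\<in>S. c \<gamma> *\<^sub>R \<gamma>)" using refl c(2)[symmetric] by simp
    have "nonneg_comb (S - {\<alpha>}) \<beta>"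
      using nonneg_comb_mem[of "S - {\<alpha>}" \<beta>] fin ab by simp
    then have "e \<bullet> \<beta> \<le> 0"
      by (rule irredundant_generator_split[OF fin pos irr ab(1) k split c(1)])
    then show False using pos ab(2) by force
  qed
qed

lemma simple_system_exists:
  assumes rs: "root_system \<Phi>" and reg: "\<forall>\<beta>\<in>\<Phi>. e \<bullet> \<beta> \<noteq> 0"
  obtains S where "simple_system \<Phi> S" "S \<subseteq> {\<beta>\<in>\<Phi>. e \<bullet> \<beta> > 0}"
proof -
  let ?P = "{\<beta>\<in>\<Phi>. e \<bullet> \<beta> > 0}"
  obtain S where S: "S \<subseteq> ?P" "\<forall>\<beta>\<in>?P. nonneg_comb S \<beta>" "\<forall>x\<in>S. \<not> nonneg_comb (S - {x}) x"
    using exists_irredundant_generators[of ?P] rs by (auto simp: root_system_def)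
  have "finite S" using S(1) by (auto intro: finite_subset[OF _ root_system_finite[OF rs]])
  then have "independent S"
    using pairwise_obtuse_independent[of S e] S irredundant_positive_roots_obtuse[OF rs reg S] by auto
  moreover have "\<exists>c. \<beta> = (\<Sum>\<alpha>\<in>S. c \<alpha> *\<^sub>R \<alpha>) \<and> ((\<forall>\<alpha>\<in>S. c \<alpha> \<ge> 0) \<or> (\<forall>\<alpha>\<in>S. c \<alpha> \<le> 0))"
    if "\<beta> \<in> \<Phi>" for \<beta>
  proof (cases "e \<bullet> \<beta> > 0")
    case True
    then show ?thesis using S(2) that by (auto simp: nonneg_comb_def)
  next
    case False
    then have "- \<beta> \<in> ?P" using reg that root_system_uminus[OF rs] by (force simp: linorder_neq_iff)
    then obtain c where c: "\<forall>\<gamma>\<in>S. c \<gamma> \<ge> 0" "- \<beta> = (\<Sum>\<gamma>\<in>S. c \<gamma> *\<^sub>R \<gamma>)"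
      using S(2) by (auto simp: nonneg_comb_def)
    have "\<beta> = - (\<Sum>\<gamma>\<in>S. c \<gamma> *\<^sub>R \<gamma>)"
      using arg_cong[OF c(2), of uminus] by simp
    then have "\<beta> = (\<Sum>\<gamma>\<in>S. (- c \<gamma>) *\<^sub>R \<gamma>)"
      by (simp add: sum_negf)
    then show ?thesis using c(1) by (intro exI[of _ "\<lambda>\<gamma>. - c \<gamma>"]) auto
  qed
  ultimately show ?thesis using S(1) by (intro that) (auto simp: simple_system_def)
qed

lemma simple_system_nonneg_comb:
  assumes S: "simple_system X S" "\<forall>\<gamma>\<in>S. e \<bullet> \<gamma> > 0" and "\<beta> \<in> X" "e \<bullet> \<beta> > 0"
  shows "nonneg_comb S \<beta>"
proof -
  obtain c where c: "\<beta> = (\<Sum>\<alpha>\<in>S. c \<alpha> *\<^sub>R \<alpha>)" "(\<forall>\<alpha>\<in>S. c \<alpha> \<ge> 0) \<or> (\<forall>\<alpha>\<in>S. c \<alpha> \<le> 0)"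
    using S(1) \<open>\<beta> \<in> X\<close> unfolding simple_system_def by blast
  have "\<forall>\<alpha>\<in>S. c \<alpha> \<ge> 0"
  proof (rule ccontr)
    assume "\<not> (\<forall>\<alpha>\<in>S. c \<alpha> \<ge> 0)"
    then have "\<forall>\<alpha>\<in>S. c \<alpha> * (e \<bullet> \<alpha>) \<le> 0"
      using c(2) S(2) by (auto intro: mult_nonpos_nonneg less_imp_le)
    then have "e \<bullet> \<beta> \<le> 0"
      unfolding c(1) by (simp add: inner_sum_right sum_nonpos)
    then show False using \<open>e \<bullet> \<beta> > 0\<close> by simp
  qed
  then show ?thesis using c(1) by (auto simp: nonneg_comb_def)
qed

lemma simple_system_unique:
  assumes rs: "root_system \<Phi>"
    and S: "simple_system \<Phi> S" "\<forall>\<gamma>\<in>S. e \<bullet> \<gamma> > 0"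
    and S': "simple_system \<Phi> S'" "\<forall>\<gamma>\<in>S'. e \<bullet> \<gamma> > 0"
  shows "S \<subseteq> S'"
proof
  fix x assume x: "x \<in> S"
  have x\<Phi>: "x \<in> \<Phi>" using S(1) x by (auto simp: simple_system_def)
  obtain c where c: "\<forall>\<gamma>\<in>S'. c \<gamma> \<ge> 0" "x = (\<Sum>\<gamma>\<in>S'. c \<gamma> *\<^sub>R \<gamma>)"
    using simple_system_nonneg_comb[OF S' x\<Phi>] S(2) x by (auto simp: nonneg_comb_def)
  have "\<forall>\<gamma>\<in>S'. nonneg_comb S \<gamma>"
    using simple_system_nonneg_comb[OF S] S' by (auto simp: simple_system_def)
  then obtain \<gamma> r where \<gamma>: "\<gamma> \<in> S'" "r > 0" "\<gamma> = r *\<^sub>R x"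
    using independent_nonneg_comb_extreme[of S x S' c] S(1) x simple_system_finite[OF rs S'(1)] c
    by (auto simp: simple_system_def)
  moreover have "\<gamma> \<in> \<Phi>" using S'(1) \<gamma>(1) by (auto simp: simple_system_def)
  ultimately have "r = 1" using root_system_pos_multiple[OF rs x\<Phi>] by simp
  then show "x \<in> S'" using \<gamma> by simp
qed

lemma simple_roots_Ch:
  assumes rs: "root_system \<Phi>" and C: "C \<in> Ch \<Phi>"
  shows "simple_system \<Phi> (simple_roots \<Phi> C)" "simple_roots \<Phi> C \<subseteq> pos_roots \<Phi> C"
proof -
  obtain e where e: "e \<in> C" using Ch_nonempty[OF C] by blast
  have pos: "pos_roots \<Phi> C = {\<beta>\<in>\<Phi>. e \<bullet> \<beta> > 0}" using pos_roots_Ch[OF C e] .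
  obtain S where S: "simple_system \<Phi> S" "S \<subseteq> pos_roots \<Phi> C"
    using simple_system_exists[OF rs, of e] Ch_inner_nonzero[OF C e] unfolding pos by blast
  have "simple_roots \<Phi> C = S" unfolding simple_roots_def
  proof (rule the_equality)
    show "simple_system \<Phi> S \<and> S \<subseteq> pos_roots \<Phi> C" using S by blast
    fix S' assume S': "simple_system \<Phi> S' \<and> S' \<subseteq> pos_roots \<Phi> C"
    have Spos: "\<forall>\<gamma>\<in>S. e \<bullet> \<gamma> > 0" and S'pos: "\<forall>\<gamma>\<in>S'. e \<bullet> \<gamma> > 0"
      using S(2) S' pos by auto
    show "S' = S"
      using simple_system_unique[OF rs S(1) Spos _ S'pos] simple_system_unique[OF rs _ S'pos S(1) Spos] S'
      by blast
  qed
  then show "simple_system \<Phi> (simple_roots \<Phi> C)" "simple_roots \<Phi> C \<subseteq> pos_roots \<Phi> C"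
    using S by simp_all
qed

subsection \<open>Lifting implies saturation\<close>

lemma simple_system_subset_coeffs_sign:
  assumes S: "simple_system \<Phi> S" "J \<subseteq> S" and "\<beta> \<in> \<Phi>" "\<beta> = (\<Sum>\<gamma>\<in>J. d \<gamma> *\<^sub>R \<gamma>)"
  shows "(\<forall>\<gamma>\<in>J. d \<gamma> \<ge> 0) \<or> (\<forall>\<gamma>\<in>J. d \<gamma> \<le> 0)"
proof -
  obtain b where b: "\<beta> = (\<Sum>\<gamma>\<in>S. b \<gamma> *\<^sub>R \<gamma>)" "(\<forall>\<gamma>\<in>S. b \<gamma> \<ge> 0) \<or> (\<forall>\<gamma>\<in>S. b \<gamma> \<le> 0)"
    using S(1) \<open>\<beta> \<in> \<Phi>\<close> unfolding simple_system_def by blast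
  have "independent S" using S(1) by (simp add: simple_system_def)
  moreover have "(\<Sum>\<gamma>\<in>J. d \<gamma> *\<^sub>R \<gamma>) = (\<Sum>\<gamma>\<in>S. b \<gamma> *\<^sub>R \<gamma>)" using assms(4) b(1) by simp
  ultimately have "\<forall>\<gamma>\<in>J. d \<gamma> = b \<gamma>"
    using independent_subset_coeffs_eq S(2) by blast
  then show ?thesis using b(2) S(2) by auto
qed

lemma nonneg_comb_acute_member:
  fixes \<beta> :: "'a::real_inner"
  assumes "\<beta> \<noteq> 0" "\<beta> = (\<Sum>\<gamma>\<in>J. c \<gamma> *\<^sub>R \<gamma>)" "\<forall>\<gamma>\<in>J. c \<gamma> \<ge> 0"
  obtains \<alpha> where "\<alpha> \<in> J" "\<beta> \<bullet> \<alpha> > 0"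
proof -
  have "0 < \<beta> \<bullet> \<beta>" using assms(1) by simp
  also have "\<beta> \<bullet> \<beta> = (\<Sum>\<gamma>\<in>J. c \<gamma> * (\<beta> \<bullet> \<gamma>))"
    by (subst (2) assms(2)) (simp add: inner_sum_right)
  finally have sum_pos: "0 < (\<Sum>\<gamma>\<in>J. c \<gamma> * (\<beta> \<bullet> \<gamma>))" .
  have "\<exists>\<alpha>\<in>J. c \<alpha> * (\<beta> \<bullet> \<alpha>) > 0"
  proof (rule ccontr)
    assume "\<not> (\<exists>\<alpha>\<in>J. c \<alpha> * (\<beta> \<bullet> \<alpha>) > 0)"
    then have "(\<Sum>\<gamma>\<in>J. c \<gamma> * (\<beta> \<bullet> \<gamma>)) \<le> 0" by (intro sum_nonpos) (simp add: not_less)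
    then show False using sum_pos by simp
  qed
  then obtain \<alpha> where "\<alpha> \<in> J" "c \<alpha> * (\<beta> \<bullet> \<alpha>) > 0" by blast
  then show ?thesis using assms(3) by (intro that[of \<alpha>]) (auto simp: zero_less_mult_iff)
qed

lemma reflection_keeps_nonneg_comb:
  assumes rs: "root_system \<Phi>" and S: "simple_system \<Phi> S" "J \<subseteq> S"
    and \<beta>: "\<beta> \<in> \<Phi>" "\<beta> \<notin> J" "\<beta> = (\<Sum>\<gamma>\<in>J. c \<gamma> *\<^sub>R \<gamma>)" "\<forall>\<gamma>\<in>J. c \<gamma> \<ge> 0"
    and \<alpha>: "\<alpha> \<in> J" "\<beta> \<bullet> \<alpha> > 0"
  shows "nonneg_comb J (refl \<alpha> \<beta>)"
proof -
  have fin: "finite J" using simple_system_finite[OF rs S(1)] S(2) finite_subset by blast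
  have "\<alpha> \<in> \<Phi>" using S \<alpha>(1) by (auto simp: simple_system_def)
  define k where "k = 2 * (\<beta> \<bullet> \<alpha>) / (\<alpha> \<bullet> \<alpha>)"
  define c' where "c' \<gamma> = c \<gamma> - (if \<gamma> = \<alpha> then k else 0)" for \<gamma>
  have "(\<Sum>\<gamma>\<in>J. c' \<gamma> *\<^sub>R \<gamma>) = \<beta> - (\<Sum>\<gamma>\<in>J. (if \<gamma> = \<alpha> then k else 0) *\<^sub>R \<gamma>)"
    by (simp add: \<beta>(3) c'_def scaleR_diff_left sum_subtractf)
  also have "\<dots> = refl \<alpha> \<beta>"
    using fin \<alpha>(1) by (simp add: refl_def k_def if_distrib[of "\<lambda>c. c *\<^sub>R _"] sum.delta cong: if_cong)
  finally have c': "refl \<alpha> \<beta> = (\<Sum>\<gamma>\<in>J. c' \<gamma> *\<^sub>R \<gamma>)" ..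
  have "refl \<alpha> \<beta> \<in> \<Phi>" using rs \<open>\<alpha> \<in> \<Phi>\<close> \<beta>(1) by (auto simp: root_system_def)
  then consider "\<forall>\<gamma>\<in>J. c' \<gamma> \<ge> 0" | "\<forall>\<gamma>\<in>J. c' \<gamma> \<le> 0"
    using simple_system_subset_coeffs_sign[OF S _ c'] by blast
  then show ?thesis
  proof cases
    case 1
    then show ?thesis using c' unfolding nonneg_comb_def by blast
  next
    case 2
    then have "c \<gamma> = 0" if "\<gamma> \<in> J" "\<gamma> \<noteq> \<alpha>" for \<gamma>
      using \<beta>(4) that by (force simp: c'_def)
    then have "\<beta> = (\<Sum>\<gamma>\<in>J. (if \<gamma> = \<alpha> then c \<alpha> else 0) *\<^sub>R \<gamma>)"
      unfolding \<beta>(3) by (intro sum.cong) auto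
    then have \<beta>\<alpha>: "\<beta> = c \<alpha> *\<^sub>R \<alpha>"
      using fin \<alpha>(1) by (simp add: if_distrib[of "\<lambda>c. c *\<^sub>R _"] sum.delta cong: if_cong)
    then have "c \<alpha> > 0" using \<beta>(4) \<alpha> by (auto simp: order_le_less)
    then have "c \<alpha> = 1" using root_system_pos_multiple[OF rs \<open>\<alpha> \<in> \<Phi>\<close>] \<beta>\<alpha> \<beta>(1) by simp
    then show ?thesis using \<beta>\<alpha> \<beta>(2) \<alpha>(1) by simp
  qed
qed

text \<open>Induction on the height \<open>#{\<gamma> \<in> \<Phi>. e \<bullet> \<gamma> < e \<bullet> \<beta>}\<close>: reflecting in an acute \<open>\<alpha> \<in> J\<close>
  lowers \<open>e \<bullet> \<beta>\<close> and stays in the cone of \<open>J\<close>.\<close>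
lemma lifted_nonneg_comb_mem:
  assumes rs: "root_system \<Phi>" and sub: "root_subsystem \<Phi> \<Psi>"
    and S: "simple_system \<Phi> S" and J: "simple_system \<Psi> J" "J \<subseteq> S" "\<forall>\<gamma>\<in>J. e \<bullet> \<gamma> > 0"
    and "\<beta> \<in> \<Phi>" "nonneg_comb J \<beta>"
  shows "\<beta> \<in> \<Psi>"
  using assms(7,8)
proof (induction "card {\<gamma>\<in>\<Phi>. e \<bullet> \<gamma> < e \<bullet> \<beta>}" arbitrary: \<beta> rule: less_induct)
  case less
  show ?case
  proof (cases "\<beta> \<in> J")
    case True
    then show ?thesis using J(1) by (auto simp: simple_system_def)
  next
    case False
    obtain c where c: "\<forall>\<gamma>\<in>J. c \<gamma> \<ge> 0" "\<beta> = (\<Sum>\<gamma>\<in>J. c \<gamma> *\<^sub>R \<gamma>)"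
      using less.prems(2) by (auto simp: nonneg_comb_def)
    have "\<beta> \<noteq> 0" using less.prems(1) rs by (auto simp: root_system_def)
    then obtain \<alpha> where \<alpha>: "\<alpha> \<in> J" "\<beta> \<bullet> \<alpha> > 0"
      using nonneg_comb_acute_member[OF \<open>\<beta> \<noteq> 0\<close> c(2) c(1)] by blast
    have \<alpha>\<Psi>: "\<alpha> \<in> \<Psi>" using J(1) \<alpha>(1) by (auto simp: simple_system_def)
    then have "\<alpha> \<in> \<Phi>" "\<alpha> \<noteq> 0" using sub rs by (auto simp: root_subsystem_def root_system_def)
    define \<beta>' where "\<beta>' = refl \<alpha> \<beta>"
    have \<beta>'\<Phi>: "\<beta>' \<in> \<Phi>"
      using rs \<open>\<alpha> \<in> \<Phi>\<close> less.prems(1) by (auto simp: root_system_def \<beta>'_def)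
    have "2 * (\<beta> \<bullet> \<alpha>) / (\<alpha> \<bullet> \<alpha>) * (e \<bullet> \<alpha>) > 0"
      using \<alpha> J(3) \<open>\<alpha> \<noteq> 0\<close> by simp
    then have "e \<bullet> \<beta>' < e \<bullet> \<beta>"
      by (simp add: \<beta>'_def refl_def inner_diff_right)
    then have "{\<gamma>\<in>\<Phi>. e \<bullet> \<gamma> < e \<bullet> \<beta>'} \<subset> {\<gamma>\<in>\<Phi>. e \<bullet> \<gamma> < e \<bullet> \<beta>}"
      using \<beta>'\<Phi> by auto
    then have "card {\<gamma>\<in>\<Phi>. e \<bullet> \<gamma> < e \<bullet> \<beta>'} < card {\<gamma>\<in>\<Phi>. e \<bullet> \<gamma> < e \<bullet> \<beta>}"
      using root_system_finite[OF rs] by (intro psubset_card_mono) auto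
    moreover have "nonneg_comb J \<beta>'"
      unfolding \<beta>'_def
      using reflection_keeps_nonneg_comb[OF rs S J(2) less.prems(1) False c(2) c(1) \<alpha>] .
    ultimately have "\<beta>' \<in> \<Psi>" using less.hyps \<beta>'\<Phi> by blast
    then have "refl \<alpha> \<beta>' \<in> \<Psi>" using sub \<alpha>\<Psi> by (auto simp: root_subsystem_def)
    then show ?thesis using refl_refl[OF \<open>\<alpha> \<noteq> 0\<close>] by (simp add: \<beta>'_def)
  qed
qed

lemma lifts_imp_saturated:
  assumes rs: "root_system \<Phi>" and sub: "root_subsystem \<Phi> \<Psi>"
    and C: "C \<in> Ch \<Phi>" and D: "D \<in> Ch \<Psi>" and lift: "lifts \<Phi> \<Psi> C D"
  shows "saturated \<Phi> \<Psi>"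
proof -
  have rs\<Psi>: "root_system \<Psi>" using root_subsystem_imp_root_system[OF rs sub] .
  define J where "J = simple_roots \<Psi> D"
  have J: "simple_system \<Psi> J" "J \<subseteq> pos_roots \<Psi> D"
    using simple_roots_Ch[OF rs\<Psi> D] by (simp_all add: J_def)
  have S: "simple_system \<Phi> (simple_roots \<Phi> C)" and JS: "J \<subseteq> simple_roots \<Phi> C"
    using simple_roots_Ch[OF rs C] lift by (simp_all add: lifts_def J_def)
  obtain e where "e \<in> D" using Ch_nonempty[OF D] by blast
  then have Jpos: "\<forall>\<gamma>\<in>J. e \<bullet> \<gamma> > 0" using J(2) pos_roots_Ch[OF D] by auto
  have finJ: "finite J" using simple_system_finite[OF rs\<Psi> J(1)] .
  have "\<Psi> \<subseteq> span J"
  proof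
    fix \<psi> assume "\<psi> \<in> \<Psi>"
    then obtain c where "\<psi> = (\<Sum>\<gamma>\<in>J. c \<gamma> *\<^sub>R \<gamma>)" using J(1) unfolding simple_system_def by blast
    then show "\<psi> \<in> span J" by (simp add: span_sum span_scale span_base)
  qed
  then have span: "span \<Psi> \<subseteq> span J" by (simp add: span_minimal)
  have "\<beta> \<in> \<Psi>" if \<beta>: "\<beta> \<in> span \<Psi>" "\<beta> \<in> \<Phi>" for \<beta>
  proof -
    obtain d where d: "\<beta> = (\<Sum>\<gamma>\<in>J. d \<gamma> *\<^sub>R \<gamma>)"
      using \<beta>(1) span span_finite[OF finJ] by auto
    consider "\<forall>\<gamma>\<in>J. d \<gamma> \<ge> 0" | "\<forall>\<gamma>\<in>J. d \<gamma> \<le> 0"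
      using simple_system_subset_coeffs_sign[OF S JS \<beta>(2) d] by blast
    then show ?thesis
    proof cases
      case 1
      then have "nonneg_comb J \<beta>" using d by (auto simp: nonneg_comb_def)
      then show ?thesis using lifted_nonneg_comb_mem[OF rs sub S J(1) JS Jpos \<beta>(2)] by blast
    next
      case 2
      have "- \<beta> = (\<Sum>\<gamma>\<in>J. (- d \<gamma>) *\<^sub>R \<gamma>)" using d by (simp add: sum_negf)
      then have "nonneg_comb J (- \<beta>)"
        using 2 unfolding nonneg_comb_def by (intro exI[of _ "\<lambda>\<gamma>. - d \<gamma>"]) auto
      then have "- \<beta> \<in> \<Psi>"
        using lifted_nonneg_comb_mem[OF rs sub S J(1) JS Jpos root_system_uminus[OF rs \<beta>(2)]] by blast
      then show ?thesis using root_system_uminus[OF rs\<Psi>] by fastforce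
    qed
  qed
  then show ?thesis using sub span_superset by (auto simp: saturated_def root_subsystem_def)
qed

subsection \<open>Saturation implies lifting\<close>

lemma exists_orthogonal_nonzero_inner:
  fixes V :: "'a::euclidean_space set"
  assumes "finite B" "B \<inter> span V = {}"
  obtains y where "\<forall>v\<in>span V. y \<bullet> v = 0" "\<forall>\<beta>\<in>B. y \<bullet> \<beta> \<noteq> 0"
proof -
  have "\<exists>q. q \<noteq> 0 \<and> (\<forall>w\<in>span V. q \<bullet> w = 0) \<and> \<beta> - q \<in> span V" if "\<beta> \<in> B" for \<beta>
  proof -
    obtain p q where "p \<in> span V" "\<And>w. w \<in> span V \<Longrightarrow> orthogonal q w" "\<beta> = p + q"
      using orthogonal_subspace_decomp_exists[of V \<beta>] by blast
    then show ?thesis using that assms(2) by (intro exI[of _ q]) (auto simp: orthogonal_def)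
  qed
  then obtain Q where Q: "\<forall>\<beta>\<in>B. Q \<beta> \<noteq> 0 \<and> (\<forall>w\<in>span V. Q \<beta> \<bullet> w = 0) \<and> \<beta> - Q \<beta> \<in> span V"
    by metis
  text \<open>\<open>Q \<beta>\<close> is the component of \<open>\<beta>\<close> orthogonal to \<open>span V\<close>; pick \<open>z\<close> off all
    hyperplanes \<open>Q \<beta>\<^sup>\<bottom>\<close> and project it onto the orthogonal complement.\<close>
  have "negligible (\<Union>\<beta>\<in>B. {z. Q \<beta> \<bullet> z = 0})"
    using assms(1) Q by (intro negligible_Union) (auto intro: negligible_hyperplane)
  moreover have "\<not> negligible (UNIV :: 'a set)" by (rule non_negligible_UNIV)
  ultimately obtain z where "z \<notin> (\<Union>\<beta>\<in>B. {z. Q \<beta> \<bullet> z = 0})" by (metis UNIV_eq_I)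
  then have z: "\<forall>\<beta>\<in>B. Q \<beta> \<bullet> z \<noteq> 0" by blast
  obtain z\<^sub>1 y where zy: "z\<^sub>1 \<in> span V" "\<And>w. w \<in> span V \<Longrightarrow> orthogonal y w" "z = z\<^sub>1 + y"
    using orthogonal_subspace_decomp_exists[of V z] by blast
  have y0: "\<forall>v\<in>span V. y \<bullet> v = 0" using zy(2) by (simp add: orthogonal_def)
  have "y \<bullet> \<beta> \<noteq> 0" if "\<beta> \<in> B" for \<beta>
  proof -
    have q: "y \<bullet> (\<beta> - Q \<beta>) = 0" "z\<^sub>1 \<bullet> Q \<beta> = 0"
      using y0 Q that zy(1) by (auto simp: inner_commute)
    have "y \<bullet> \<beta> = y \<bullet> (\<beta> - Q \<beta>) + (z - z\<^sub>1) \<bullet> Q \<beta>"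
      using zy(3) by (simp add: inner_diff_right)
    also have "\<dots> = z \<bullet> Q \<beta>"
      using q by (simp add: inner_diff_left)
    finally show ?thesis using z that by (simp add: inner_commute)
  qed
  then show ?thesis using that y0 by blast
qed

lemma exists_dominating_multiple:
  assumes "finite B" "\<forall>\<beta>\<in>B. y \<bullet> \<beta> \<noteq> 0"
  obtains t :: real
  where "\<forall>\<beta>\<in>B. (t *\<^sub>R y + e) \<bullet> \<beta> \<noteq> 0 \<and> ((t *\<^sub>R y + e) \<bullet> \<beta> > 0 \<longleftrightarrow> y \<bullet> \<beta> > 0)"
proof -
  define t where "t = 1 + (\<Sum>\<beta>\<in>B. \<bar>e \<bullet> \<beta>\<bar> / \<bar>y \<bullet> \<beta>\<bar>)"
  have "(t *\<^sub>R y + e) \<bullet> \<beta> \<noteq> 0 \<and> ((t *\<^sub>R y + e) \<bullet> \<beta> > 0 \<longleftrightarrow> y \<bullet> \<beta> > 0)" if "\<beta> \<in> B" for \<beta>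
  proof -
    have "\<bar>e \<bullet> \<beta>\<bar> / \<bar>y \<bullet> \<beta>\<bar> \<le> (\<Sum>\<beta>\<in>B. \<bar>e \<bullet> \<beta>\<bar> / \<bar>y \<bullet> \<beta>\<bar>)"
      using assms(1) that by (intro member_le_sum) auto
    then have "\<bar>e \<bullet> \<beta>\<bar> / \<bar>y \<bullet> \<beta>\<bar> < t" by (simp add: t_def)
    then have dom: "\<bar>e \<bullet> \<beta>\<bar> < t * \<bar>y \<bullet> \<beta>\<bar>"
      using assms(2) that by (simp add: divide_less_eq)
    have "(t *\<^sub>R y + e) \<bullet> \<beta> = t * (y \<bullet> \<beta>) + e \<bullet> \<beta>" by (simp add: inner_add_left)
    then show ?thesis using dom by (cases "y \<bullet> \<beta> > 0") (auto simp: abs_if split: if_splits)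
  qed
  then show ?thesis by (intro that) blast
qed

lemma lexicographic_chamber_lifts:
  assumes rs: "root_system \<Phi>" and sub: "root_subsystem \<Phi> \<Psi>" and sat: "saturated \<Phi> \<Psi>"
    and D: "D \<in> Ch \<Psi>" "e \<in> D" and C: "C \<in> Ch \<Phi>" "x \<in> C"
    and y0: "\<forall>v\<in>\<Psi>. y \<bullet> v = 0" and y_sign: "\<forall>\<beta>\<in>\<Phi> - span \<Psi>. x \<bullet> \<beta> > 0 \<longleftrightarrow> y \<bullet> \<beta> > 0"
    and xe: "\<forall>\<beta>\<in>\<Psi>. x \<bullet> \<beta> = e \<bullet> \<beta>"
  shows "lifts \<Phi> \<Psi> C D"
proof -
  define J where "J = simple_roots \<Psi> D"
  define S where "S = simple_roots \<Phi> C"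
  have J: "simple_system \<Psi> J" and Jpos: "\<forall>\<gamma>\<in>J. e \<bullet> \<gamma> > 0"
    using simple_roots_Ch[OF root_subsystem_imp_root_system[OF rs sub] D(1)] pos_roots_Ch[OF D]
    by (auto simp: J_def)
  have S: "simple_system \<Phi> S" and Spos: "\<forall>\<gamma>\<in>S. x \<bullet> \<gamma> > 0"
    using simple_roots_Ch[OF rs C(1)] pos_roots_Ch[OF C] by (auto simp: S_def)
  have \<Psi>: "\<Psi> = span \<Psi> \<inter> \<Phi>" using sat by (simp add: saturated_def)
  have S\<Phi>: "S \<subseteq> \<Phi>" using S by (simp add: simple_system_def)
  have finS: "finite S" using simple_system_finite[OF rs S] .
  have y_pos: "y \<bullet> \<gamma> > 0" if "\<gamma> \<in> S - span \<Psi>" for \<gamma>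
    using y_sign Spos S\<Phi> that by blast
  have y_nonneg: "\<forall>\<gamma>\<in>S. y \<bullet> \<gamma> \<ge> 0"
  proof
    fix \<gamma> assume "\<gamma> \<in> S"
    show "y \<bullet> \<gamma> \<ge> 0"
    proof (cases "\<gamma> \<in> span \<Psi>")
      case True
      then have "\<gamma> \<in> \<Psi>" using \<Psi> S\<Phi> \<open>\<gamma> \<in> S\<close> by blast
      then show ?thesis using y0 by simp
    next
      case False
      then show ?thesis using y_pos \<open>\<gamma> \<in> S\<close> by (simp add: less_imp_le)
    qed
  qed
  text \<open>Applying \<open>y\<close> to a simple root \<open>\<alpha> \<in> J\<close> written in terms of \<open>S\<close> shows that only simple
    roots in \<open>span \<Psi>\<close> occur.\<close>
  have "J \<subseteq> S"
  proof
    fix \<alpha> assume "\<alpha> \<in> J"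
    then have \<alpha>: "\<alpha> \<in> \<Psi>" "\<alpha> \<in> \<Phi>" using J sub by (auto simp: simple_system_def root_subsystem_def)
    then obtain c where c: "\<forall>\<gamma>\<in>S. c \<gamma> \<ge> 0" "\<alpha> = (\<Sum>\<gamma>\<in>S. c \<gamma> *\<^sub>R \<gamma>)"
      using simple_system_nonneg_comb[OF S Spos \<alpha>(2)] xe Jpos \<open>\<alpha> \<in> J\<close> by (auto simp: nonneg_comb_def)
    have "y \<bullet> (\<Sum>\<gamma>\<in>S. c \<gamma> *\<^sub>R \<gamma>) = 0" using y0 \<alpha>(1) c(2) by simp
    then have "c \<gamma> = 0" if "\<gamma> \<in> S - span \<Psi>" for \<gamma>
      using nonneg_comb_inner_zero_support[OF finS c(1) y_nonneg] y_pos[OF that] that by blast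
    then have "\<alpha> = (\<Sum>\<gamma>\<in>S \<inter> span \<Psi>. c \<gamma> *\<^sub>R \<gamma>)"
      unfolding c(2) using finS by (intro sum.mono_neutral_right) auto
    moreover have "\<forall>\<gamma>\<in>S \<inter> span \<Psi>. nonneg_comb J \<gamma>"
    proof
      fix \<gamma> assume \<gamma>: "\<gamma> \<in> S \<inter> span \<Psi>"
      then have "\<gamma> \<in> \<Psi>" using \<Psi> S\<Phi> by blast
      moreover have "e \<bullet> \<gamma> > 0" using xe Spos \<gamma> \<open>\<gamma> \<in> \<Psi>\<close> by force
      ultimately show "nonneg_comb J \<gamma>" using simple_system_nonneg_comb[OF J Jpos] by blast
    qed
    ultimately obtain \<gamma> r where \<gamma>: "\<gamma> \<in> S \<inter> span \<Psi>" "r > 0" "\<gamma> = r *\<^sub>R \<alpha>"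
      using independent_nonneg_comb_extreme[of J \<alpha> "S \<inter> span \<Psi>" c] J \<open>\<alpha> \<in> J\<close> finS c(1)
      by (auto simp: simple_system_def)
    then have "r = 1" using root_system_pos_multiple[OF rs \<alpha>(2)] S\<Phi> by auto
    then show "\<alpha> \<in> S" using \<gamma> by simp
  qed
  then show ?thesis by (simp add: lifts_def J_def S_def)
qed

lemma saturated_imp_lifts:
  assumes rs: "root_system \<Phi>" and sub: "root_subsystem \<Phi> \<Psi>" and sat: "saturated \<Phi> \<Psi>"
    and D: "D \<in> Ch \<Psi>"
  shows "\<exists>C\<in>Ch \<Phi>. lifts \<Phi> \<Psi> C D"
proof -
  obtain e where e: "e \<in> D" using Ch_nonempty[OF D] by blast
  have fin: "finite (\<Phi> - span \<Psi>)" using root_system_finite[OF rs] by simp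
  obtain y where y: "\<forall>v\<in>span \<Psi>. y \<bullet> v = 0" "\<forall>\<beta>\<in>\<Phi> - span \<Psi>. y \<bullet> \<beta> \<noteq> 0"
    using exists_orthogonal_nonzero_inner[OF fin, of \<Psi>] by blast
  obtain t where t: "\<forall>\<beta>\<in>\<Phi> - span \<Psi>. (t *\<^sub>R y + e) \<bullet> \<beta> \<noteq> 0 \<and> ((t *\<^sub>R y + e) \<bullet> \<beta> > 0 \<longleftrightarrow> y \<bullet> \<beta> > 0)"
    using exists_dominating_multiple[OF fin y(2)] by blast
  define x where "x = t *\<^sub>R y + e"
  have y0: "\<forall>v\<in>\<Psi>. y \<bullet> v = 0" using y(1) span_base by blast
  then have xe: "\<forall>\<beta>\<in>\<Psi>. x \<bullet> \<beta> = e \<bullet> \<beta>" by (simp add: x_def inner_add_left)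
  have "x \<bullet> \<alpha> \<noteq> 0" if "\<alpha> \<in> \<Phi>" for \<alpha>
  proof (cases "\<alpha> \<in> span \<Psi>")
    case True
    then have "\<alpha> \<in> \<Psi>" using sat that by (auto simp: saturated_def)
    then show ?thesis using xe Ch_inner_nonzero[OF D e] by simp
  next
    case False
    then show ?thesis using t that by (simp add: x_def)
  qed
  then obtain C where "C \<in> Ch \<Phi>" "x \<in> C" using Ch_exists by blast
  then show ?thesis
    using lexicographic_chamber_lifts[OF rs sub sat D e _ _ y0 _ xe] t by (auto simp: x_def)
qed

theorem theorem1:
  fixes \<Phi> \<Psi> :: "'a::euclidean_space set"
  assumes "root_system \<Phi>" and "root_subsystem \<Phi> \<Psi>"
  shows "(saturated \<Phi> \<Psi> \<longrightarrow> (\<forall>D\<in>Ch \<Psi>. \<exists>C\<in>Ch \<Phi>. lifts \<Phi> \<Psi> C D))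
       \<and> ((\<exists>C\<in>Ch \<Phi>. \<exists>D\<in>Ch \<Psi>. lifts \<Phi> \<Psi> C D) \<longrightarrow> saturated \<Phi> \<Psi>)"
  using saturated_imp_lifts[OF assms] lifts_imp_saturated[OF assms] by blast

end
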